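(* Let $R$ be a finitely generated $\mathbb{C}$-algebra which is a domain, and let $r,s,r',s'\in R$. For $a,b\in R$ put $A_{a,b}:=R[U,V]/(aU-bV-1)$. If $\operatorname{rad}(r,s)=\operatorname{rad}(r',s')$ (radicals of the ideals generated by $r,s$ and by $r',s'$), then $A_{r,s}[T]\cong A_{r',s'}[T]$, where $T$ is an indeterminate. *)

theory Defs
  imports Complex_Main "HOL-Algebra.Algebra"
begin

definition complex_ring :: "complex ring" where
  "complex_ring = \<lparr>carrier = UNIV, monoid.mult = (\<lambda>x y. x * y), one = 1, ring.zero = 0, ring.add = (\<lambda>x y. x + y)\<rparr>"

definition fg_C_algebra :: "('a, 'b) ring_scheme \<Rightarrow> (complex \<Rightarrow> 'a) \<Rightarrow> bool" where
  "fg_C_algebra R \<phi> \<longleftrightarrow> cring R \<and> \<phi> \<in> ring_hom complex_ring R \<and>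
     (\<exists>S. finite S \<and> S \<subseteq> carrier R \<and> generate_ring R (\<phi> ` UNIV \<union> S) = carrier R)"

definition radical :: "('a, 'b) ring_scheme \<Rightarrow> 'a set \<Rightarrow> 'a set" where
  "radical R I = {x \<in> carrier R. \<exists>n::nat. x [^]\<^bsub>R\<^esub> n \<in> I}"

definition polyUV :: "('a, 'b) ring_scheme \<Rightarrow> (nat \<Rightarrow> 'a, nat \<Rightarrow> nat \<Rightarrow> 'a) up_ring" where
  "polyUV R = UP (UP R)"

definition constUV :: "('a, 'b) ring_scheme \<Rightarrow> 'a \<Rightarrow> nat \<Rightarrow> nat \<Rightarrow> 'a" where
  "constUV R c = monom (UP (UP R)) (monom (UP R) c 0) 0"

definition varU :: "('a, 'b) ring_scheme \<Rightarrow> nat \<Rightarrow> nat \<Rightarrow> 'a" where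
  "varU R = monom (UP (UP R)) (monom (UP R) \<one>\<^bsub>R\<^esub> 1) 0"

definition varV :: "('a, 'b) ring_scheme \<Rightarrow> nat \<Rightarrow> nat \<Rightarrow> 'a" where
  "varV R = monom (UP (UP R)) \<one>\<^bsub>UP R\<^esub> 1"

definition relUV :: "('a, 'b) ring_scheme \<Rightarrow> 'a \<Rightarrow> 'a \<Rightarrow> nat \<Rightarrow> nat \<Rightarrow> 'a" where
  "relUV R a b = (constUV R a \<otimes>\<^bsub>polyUV R\<^esub> varU R) \<ominus>\<^bsub>polyUV R\<^esub>
                 (constUV R b \<otimes>\<^bsub>polyUV R\<^esub> varV R) \<ominus>\<^bsub>polyUV R\<^esub> \<one>\<^bsub>polyUV R\<^esub>"

definition A_ring :: "('a, 'b) ring_scheme \<Rightarrow> 'a \<Rightarrow> 'a \<Rightarrow> (nat \<Rightarrow> nat \<Rightarrow> 'a) set ring" where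
  "A_ring R a b = polyUV R Quot (Idl\<^bsub>polyUV R\<^esub> {relUV R a b})"

definition A_of :: "('a, 'b) ring_scheme \<Rightarrow> 'a \<Rightarrow> 'a \<Rightarrow> 'a \<Rightarrow> (nat \<Rightarrow> nat \<Rightarrow> 'a) set" where
  "A_of R a b x = (Idl\<^bsub>polyUV R\<^esub> {relUV R a b}) +>\<^bsub>polyUV R\<^esub> constUV R x"

definition AT_ring :: "('a, 'b) ring_scheme \<Rightarrow> 'a \<Rightarrow> 'a \<Rightarrow> _" where
  "AT_ring R a b = UP (A_ring R a b)"

definition AT_struct :: "('a, 'b) ring_scheme \<Rightarrow> (complex \<Rightarrow> 'a) \<Rightarrow> 'a \<Rightarrow> 'a \<Rightarrow> complex \<Rightarrow> nat \<Rightarrow> (nat \<Rightarrow> nat \<Rightarrow> 'a) set" where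
  "AT_struct R \<phi> a b z = monom (AT_ring R a b) (A_of R a b (\<phi> z)) 0"

definition C_alg_iso :: "('c, 'd) ring_scheme \<Rightarrow> (complex \<Rightarrow> 'c) \<Rightarrow> ('e, 'f) ring_scheme \<Rightarrow> (complex \<Rightarrow> 'e) \<Rightarrow> bool" where
  "C_alg_iso S \<sigma> S' \<sigma>' \<longleftrightarrow> (\<exists>h \<in> ring_iso S S'. \<forall>z. h (\<sigma> z) = \<sigma>' z)"

end

theory Submission
  imports Defs
begin

text \<open>Write \<open>A = A\<^sub>r\<^sub>,\<^sub>s\<close> and \<open>A' = A\<^sub>r\<^sub>'\<^sub>,\<^sub>s\<^sub>'\<close>. In \<open>A\<close> we have \<open>rU - sV = 1\<close>;
  since \<open>r', s'\<close> have powers in \<open>(r, s)\<close>, raising this relation to powers gives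
  \<open>r'\<alpha> - s'\<beta> = 1\<close> for some \<open>\<alpha>, \<beta> \<in> A\<close>, and symmetrically \<open>r\<alpha>' - s\<beta>' = 1\<close> in \<open>A'\<close>.
  The solutions of \<open>rx - sy = 1\<close> in any ring containing one solution \<open>(x\<^sub>0, y\<^sub>0)\<close> are
  exactly \<open>(x\<^sub>0 + st, y\<^sub>0 + rt)\<close>, with \<open>t\<close> recovered as \<open>x\<^sub>0y - y\<^sub>0x\<close>. Hence
  \<open>U \<mapsto> \<alpha>' + sT, V \<mapsto> \<beta>' + rT, T \<mapsto> \<alpha>V - \<beta>U\<close> defines \<open>A[T] \<rightarrow> A'[T]\<close>, and the same
  recipe with the roles exchanged gives its inverse. The argument works over any commutative
  ring.\<close>

section \<open>Polynomial rings\<close>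

lemma cring_UP: "cring R \<Longrightarrow> cring (UP R)"
  by (rule UP_cring.UP_cring) (simp add: UP_cring_def UP_def)

lemma ring_hom_minus:
  assumes "cring R" "cring S" "h \<in> ring_hom R S" "x \<in> carrier R" "y \<in> carrier R"
  shows "h (x \<ominus>\<^bsub>R\<^esub> y) = h x \<ominus>\<^bsub>S\<^esub> h y"
proof -
  interpret ring_hom_cring R S h using assms by (simp add: ring_hom_cringI)
  show ?thesis using assms by (simp add: R.minus_eq S.minus_eq)
qed

lemma UP_const_hom: "cring R \<Longrightarrow> (\<lambda>c. monom (UP R) c 0) \<in> ring_hom R (UP R)"
  by (rule UP_ring.const_ring_hom) (simp add: UP_ring_def cring.axioms(1))

lemma UP_monom_closed: "cring R \<Longrightarrow> c \<in> carrier R \<Longrightarrow> monom (UP R) c n \<in> carrier (UP R)"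
  by (rule UP_ring.monom_closed) (auto simp: UP_ring_def cring.axioms(1))

lemma UP_var_closed: "cring R \<Longrightarrow> monom (UP R) \<one>\<^bsub>R\<^esub> n \<in> carrier (UP R)"
  by (simp add: UP_monom_closed cring.axioms(1) ring.ring_simprules(6))

lemma UP_eval:
  assumes "cring R" "cring S" "h \<in> ring_hom R S" "s \<in> carrier S"
  shows "eval R S h s \<in> ring_hom (UP R) S"
    and "\<And>c. c \<in> carrier R \<Longrightarrow> eval R S h s (monom (UP R) c 0) = h c"
    and "eval R S h s (monom (UP R) \<one>\<^bsub>R\<^esub> 1) = s"
proof -
  have pre: "UP_pre_univ_prop R S h"
    using assms by (intro UP_pre_univ_propI)
  show "eval R S h s \<in> ring_hom (UP R) S"
    using UP_pre_univ_prop.eval_ring_hom[OF pre assms(4)] .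
  show "\<And>c. c \<in> carrier R \<Longrightarrow> eval R S h s (monom (UP R) c 0) = h c"
    using UP_pre_univ_prop.eval_const[OF pre assms(4)] .
  show "eval R S h s (monom (UP R) \<one>\<^bsub>R\<^esub> 1) = s"
    using UP_pre_univ_prop.eval_monom1[OF pre assms(4)] .
qed

lemma UP_hom_ext:
  assumes "cring R" "cring S" "\<Phi> \<in> ring_hom (UP R) S" "\<Psi> \<in> ring_hom (UP R) S"
    and "\<And>c. c \<in> carrier R \<Longrightarrow> \<Phi> (monom (UP R) c 0) = \<Psi> (monom (UP R) c 0)"
    and "\<Phi> (monom (UP R) \<one>\<^bsub>R\<^esub> 1) = \<Psi> (monom (UP R) \<one>\<^bsub>R\<^esub> 1)"
    and "p \<in> carrier (UP R)"
  shows "\<Phi> p = \<Psi> p"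
proof -
  define h where "h = \<Phi> \<circ> (\<lambda>c. monom (UP R) c 0)"
  have "h \<in> ring_hom R S"
    unfolding h_def by (rule ring_hom_trans[OF UP_const_hom[OF assms(1)] assms(3)])
  then have pre: "UP_pre_univ_prop R S h"
    using assms by (intro UP_pre_univ_propI)
  have cU: "cring (UP R)" using assms(1) by (rule cring_UP)
  have X: "\<Phi> (monom (UP R) \<one>\<^bsub>R\<^esub> 1) \<in> carrier S"
    by (rule ring_hom_closed[OF assms(3) UP_var_closed[OF assms(1)]])
  show ?thesis
  proof (rule UP_pre_univ_prop.UP_hom_unique[OF pre, where s = "\<Phi> (monom (UP R) \<one>\<^bsub>R\<^esub> 1)"])
    show "ring_hom_cring (UP R) S \<Phi>" "ring_hom_cring (UP R) S \<Psi>"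
      using ring_hom_cringI[OF cU assms(2)] assms(3,4) by auto
  qed (use assms X in \<open>auto simp: h_def\<close>)
qed

section \<open>Quotient rings\<close>

lemma FactRing_carrier_rcos:
  assumes "ideal I P" "C \<in> carrier (P Quot I)"
  obtains x where "x \<in> carrier P" "C = I +>\<^bsub>P\<^esub> x"
  using assms(2) unfolding FactRing_def A_RCOSETS_def' by auto

text \<open>Unlike \<open>ring_hom_ring.the_elem_hom\<close>, the ideal need only lie in the kernel.\<close>
lemma FactRing_lift:
  assumes I: "ideal I P" and S: "ring S" and g: "g \<in> ring_hom P S"
    and ker: "\<And>i. i \<in> I \<Longrightarrow> g i = \<zero>\<^bsub>S\<^esub>"
  shows "(\<lambda>C. the_elem (g ` C)) \<in> ring_hom (P Quot I) S"
    and "\<And>x. x \<in> carrier P \<Longrightarrow> the_elem (g ` (I +>\<^bsub>P\<^esub> x)) = g x"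
proof -
  interpret ideal I P by (rule I)
  have img: "g ` (I +>\<^bsub>P\<^esub> x) = {g x}" if x: "x \<in> carrier P" for x
  proof -
    have "g (i \<oplus>\<^bsub>P\<^esub> x) = g x" if "i \<in> I" for i
      using that x ker ring_hom_add[OF g] S by (simp add: ring.ring_simprules(8) ring_hom_closed[OF g])
    moreover have "\<zero>\<^bsub>P\<^esub> \<in> I" by simp
    ultimately show ?thesis unfolding a_r_coset_def' using x by auto
  qed
  then show ev: "\<And>x. x \<in> carrier P \<Longrightarrow> the_elem (g ` (I +>\<^bsub>P\<^esub> x)) = g x"
    by simp
  have pi: "(+>\<^bsub>P\<^esub>) I \<in> ring_hom P (P Quot I)" by (rule rcos_ring_hom)
  show "(\<lambda>C. the_elem (g ` C)) \<in> ring_hom (P Quot I) S"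
  proof (rule ring_hom_memI)
    fix C assume "C \<in> carrier (P Quot I)"
    then obtain x where "x \<in> carrier P" "C = I +>\<^bsub>P\<^esub> x" using FactRing_carrier_rcos[OF I] by blast
    then show "the_elem (g ` C) \<in> carrier S" using ev ring_hom_closed[OF g] by simp
  next
    fix C D assume "C \<in> carrier (P Quot I)" "D \<in> carrier (P Quot I)"
    then obtain x y where xy: "x \<in> carrier P" "C = I +>\<^bsub>P\<^esub> x" "y \<in> carrier P" "D = I +>\<^bsub>P\<^esub> y"
      using FactRing_carrier_rcos[OF I] by metis
    show "the_elem (g ` (C \<otimes>\<^bsub>P Quot I\<^esub> D)) = the_elem (g ` C) \<otimes>\<^bsub>S\<^esub> the_elem (g ` D)"
      using xy ring_hom_mult[OF pi, of x y, symmetric] ev ring_hom_mult[OF g] by simp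
    show "the_elem (g ` (C \<oplus>\<^bsub>P Quot I\<^esub> D)) = the_elem (g ` C) \<oplus>\<^bsub>S\<^esub> the_elem (g ` D)"
      using xy ring_hom_add[OF pi, of x y, symmetric] ev ring_hom_add[OF g] by simp
  next
    show "the_elem (g ` \<one>\<^bsub>P Quot I\<^esub>) = \<one>\<^bsub>S\<^esub>"
      using ring_hom_one[OF pi] ev[of "\<one>\<^bsub>P\<^esub>"] ring_hom_one[OF g] by (metis one_closed)
  qed
qed

section \<open>Solutions of \<open>a x - b y = 1\<close>\<close>

definition solves_rel :: "('c, 'd) ring_scheme \<Rightarrow> 'c \<Rightarrow> 'c \<Rightarrow> 'c \<Rightarrow> 'c \<Rightarrow> bool" where
  "solves_rel S a b x y \<longleftrightarrow> a \<otimes>\<^bsub>S\<^esub> x \<ominus>\<^bsub>S\<^esub> b \<otimes>\<^bsub>S\<^esub> y = \<one>\<^bsub>S\<^esub>"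

lemma ring_hom_solves_rel:
  assumes "cring S" "cring T" "g \<in> ring_hom S T"
    and "a \<in> carrier S" "b \<in> carrier S" "x \<in> carrier S" "y \<in> carrier S"
    and "solves_rel S a b x y"
  shows "solves_rel T (g a) (g b) (g x) (g y)"
proof -
  interpret S: cring S by fact
  have "g (a \<otimes>\<^bsub>S\<^esub> x \<ominus>\<^bsub>S\<^esub> b \<otimes>\<^bsub>S\<^esub> y) = g a \<otimes>\<^bsub>T\<^esub> g x \<ominus>\<^bsub>T\<^esub> g b \<otimes>\<^bsub>T\<^esub> g y"
    using assms(4-7) by (simp add: ring_hom_minus[OF assms(1-3)] ring_hom_mult[OF assms(3)])
  then show ?thesis
    using assms(8) ring_hom_one[OF assms(3)] by (simp add: solves_rel_def)
qed

lemma (in cring) minus_one_eq_zero_iff: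
  assumes "z \<in> carrier R"
  shows "z \<ominus> \<one> = \<zero> \<longleftrightarrow> z = \<one>"
proof
  assume "z \<ominus> \<one> = \<zero>"
  moreover have "z = (z \<ominus> \<one>) \<oplus> \<one>" using assms by algebra
  ultimately show "z = \<one>" by simp
qed (simp add: r_neg minus_eq)

text \<open>Any two solutions of \<open>a x - b y = 1\<close> differ by a multiple of \<open>(b, a)\<close>.\<close>
lemma (in cring) solves_rel_difference:
  assumes "a \<in> carrier R" "b \<in> carrier R" "x \<in> carrier R" "y \<in> carrier R"
    "p \<in> carrier R" "q \<in> carrier R"
    and "solves_rel R a b x y" "solves_rel R a b p q"
  shows "p \<oplus> b \<otimes> (p \<otimes> y \<ominus> q \<otimes> x) = x" and "q \<oplus> a \<otimes> (p \<otimes> y \<ominus> q \<otimes> x) = y"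
proof -
  have xy: "a \<otimes> x \<ominus> b \<otimes> y = \<one>" and pq: "a \<otimes> p \<ominus> b \<otimes> q = \<one>"
    using assms(7,8) by (simp_all add: solves_rel_def)
  have "p \<oplus> b \<otimes> (p \<otimes> y \<ominus> q \<otimes> x) = p \<otimes> (\<one> \<ominus> (a \<otimes> x \<ominus> b \<otimes> y)) \<oplus> x \<otimes> (a \<otimes> p \<ominus> b \<otimes> q)"
    using assms(1-6) by algebra
  also have "\<dots> = x" using assms(1-6) unfolding xy pq by algebra
  finally show "p \<oplus> b \<otimes> (p \<otimes> y \<ominus> q \<otimes> x) = x" .
  have "q \<oplus> a \<otimes> (p \<otimes> y \<ominus> q \<otimes> x) = q \<otimes> (\<one> \<ominus> (a \<otimes> x \<ominus> b \<otimes> y)) \<oplus> y \<otimes> (a \<otimes> p \<ominus> b \<otimes> q)"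
    using assms(1-6) by algebra
  also have "\<dots> = y" using assms(1-6) unfolding xy pq by algebra
  finally show "q \<oplus> a \<otimes> (p \<otimes> y \<ominus> q \<otimes> x) = y" .
qed

lemma (in cring) solves_rel_recover_param:
  assumes "a \<in> carrier R" "b \<in> carrier R" "x \<in> carrier R" "y \<in> carrier R" "t \<in> carrier R"
    and "solves_rel R a b x y"
  shows "x \<otimes> (y \<oplus> a \<otimes> t) \<ominus> y \<otimes> (x \<oplus> b \<otimes> t) = t"
proof -
  have "x \<otimes> (y \<oplus> a \<otimes> t) \<ominus> y \<otimes> (x \<oplus> b \<otimes> t) = t \<otimes> (a \<otimes> x \<ominus> b \<otimes> y)"
    using assms(1-5) by algebra
  then show ?thesis using assms by (simp add: solves_rel_def)
qed

lemma (in cring) solves_rel_shift: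
  assumes "a \<in> carrier R" "b \<in> carrier R" "x \<in> carrier R" "y \<in> carrier R" "t \<in> carrier R"
    and "solves_rel R a b x y"
  shows "solves_rel R a b (x \<oplus> b \<otimes> t) (y \<oplus> a \<otimes> t)"
proof -
  have "a \<otimes> (x \<oplus> b \<otimes> t) \<ominus> b \<otimes> (y \<oplus> a \<otimes> t) = a \<otimes> x \<ominus> b \<otimes> y"
    using assms(1-5) by algebra
  then show ?thesis using assms(6) by (simp add: solves_rel_def)
qed

section \<open>Radicals of two-generated ideals\<close>

lemma (in cring) genideal_pair_combination:
  assumes "a \<in> carrier R" "b \<in> carrier R" "z \<in> Idl {a, b}"
  obtains e1 e2 where "e1 \<in> carrier R" "e2 \<in> carrier R" "z = e1 \<otimes> a \<oplus> e2 \<otimes> b"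
proof -
  have I: "ideal (PIdl a <+> PIdl b) R"
    by (intro add_ideals cgenideal_ideal assms)
  have "a = \<one> \<otimes> a \<oplus> \<zero> \<otimes> b" "b = \<zero> \<otimes> a \<oplus> \<one> \<otimes> b" using assms by simp_all
  then have "{a, b} \<subseteq> PIdl a <+> PIdl b"
    unfolding set_add_def' cgenideal_def by blast
  then have "z \<in> PIdl a <+> PIdl b"
    using genideal_minimal[OF I] assms(3) by blast
  then show thesis
    using that unfolding set_add_def' cgenideal_def by blast
qed

lemma (in cring) self_in_radical_pair:
  assumes "a \<in> carrier R" "b \<in> carrier R"
  shows "a \<in> radical R (Idl {a, b})" "b \<in> radical R (Idl {a, b})"
proof -
  have "{a, b} \<subseteq> Idl {a, b}" by (rule genideal_self) (use assms in auto)
  moreover have "a [^] (1::nat) = a" "b [^] (1::nat) = b" using assms by auto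
  ultimately show "a \<in> radical R (Idl {a, b})" "b \<in> radical R (Idl {a, b})"
    unfolding radical_def using assms by (metis (mono_tags, lifting) insert_subset mem_Collect_eq)+
qed

lemma (in cring) comaximal_pow_left:
  assumes "a \<in> carrier R" "b \<in> carrier R" "x \<in> carrier R" "y \<in> carrier R"
    and "a \<otimes> x \<oplus> b \<otimes> y = \<one>"
  shows "\<exists>p\<in>carrier R. \<exists>q\<in>carrier R. a [^] (n::nat) \<otimes> p \<oplus> b \<otimes> q = \<one>"
proof (induction n)
  case 0
  show ?case by (rule bexI[of _ \<one>], rule bexI[of _ \<zero>]) (use assms in auto)
next
  case (Suc n)
  then obtain p q where pq: "p \<in> carrier R" "q \<in> carrier R" "a [^] n \<otimes> p \<oplus> b \<otimes> q = \<one>"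
    by blast
  have an: "a [^] n \<in> carrier R" using assms(1) by simp
  have "a [^] Suc n \<otimes> (p \<otimes> x) \<oplus> b \<otimes> (a [^] n \<otimes> p \<otimes> y \<oplus> q)
        = a [^] n \<otimes> p \<otimes> (a \<otimes> x \<oplus> b \<otimes> y) \<oplus> b \<otimes> q"
    unfolding nat_pow_Suc using an pq(1,2) assms(1-4) by algebra
  also have "\<dots> = \<one>" using assms pq by simp
  finally show ?case using pq assms by blast
qed

lemma (in cring) comaximal_pow:
  assumes "a \<in> carrier R" "b \<in> carrier R" "x \<in> carrier R" "y \<in> carrier R"
    and "a \<otimes> x \<oplus> b \<otimes> y = \<one>"
  obtains p q where "p \<in> carrier R" "q \<in> carrier R" "a [^] (n::nat) \<otimes> p \<oplus> b [^] (m::nat) \<otimes> q = \<one>"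
proof -
  obtain p q where pq: "p \<in> carrier R" "q \<in> carrier R" "a [^] n \<otimes> p \<oplus> b \<otimes> q = \<one>"
    using comaximal_pow_left[OF assms] by blast
  then have "b \<otimes> q \<oplus> a [^] n \<otimes> p = \<one>" using assms by (simp add: a_comm)
  then obtain q' p' where "q' \<in> carrier R" "p' \<in> carrier R" "b [^] m \<otimes> q' \<oplus> a [^] n \<otimes> p' = \<one>"
    using comaximal_pow_left[OF assms(2) _ pq(2,1), of "a [^] n" m] assms by auto
  then show thesis
    using that a_comm[of "b [^] m \<otimes> q'" "a [^] n \<otimes> p'"] assms by auto
qed

lemma ring_hom_radical_pair:
  assumes "cring R" "cring S" "f \<in> ring_hom R S" "c \<in> carrier R" "d \<in> carrier R"
    and "a \<in> radical R (Idl\<^bsub>R\<^esub> {c, d})"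
  obtains n :: nat and e1 e2 where "e1 \<in> carrier S" "e2 \<in> carrier S"
    "f a [^]\<^bsub>S\<^esub> n = e1 \<otimes>\<^bsub>S\<^esub> f c \<oplus>\<^bsub>S\<^esub> e2 \<otimes>\<^bsub>S\<^esub> f d"
proof -
  interpret ring_hom_cring R S f by (intro ring_hom_cringI assms(1-3))
  obtain n :: nat where a: "a \<in> carrier R" "a [^]\<^bsub>R\<^esub> n \<in> Idl\<^bsub>R\<^esub> {c, d}"
    using assms(6) by (auto simp: radical_def)
  then obtain e1 e2 where "e1 \<in> carrier R" "e2 \<in> carrier R" "a [^]\<^bsub>R\<^esub> n = e1 \<otimes>\<^bsub>R\<^esub> c \<oplus>\<^bsub>R\<^esub> e2 \<otimes>\<^bsub>R\<^esub> d"
    using R.genideal_pair_combination[OF assms(4,5)] by blast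
  moreover have "f a [^]\<^bsub>S\<^esub> n = f (a [^]\<^bsub>R\<^esub> n)" using a(1) by simp
  ultimately show thesis
    using that[of "f e1" "f e2" n] assms(4,5) by simp
qed

lemma solves_rel_radical_transfer:
  assumes "cring R" "cring S" "f \<in> ring_hom R S"
    and "a \<in> radical R (Idl\<^bsub>R\<^esub> {c, d})" "b \<in> radical R (Idl\<^bsub>R\<^esub> {c, d})"
    and "a \<in> carrier R" "b \<in> carrier R" "c \<in> carrier R" "d \<in> carrier R"
    and "x \<in> carrier S" "y \<in> carrier S" "solves_rel S (f a) (f b) x y"
  obtains p q where "p \<in> carrier S" "q \<in> carrier S" "solves_rel S (f c) (f d) p q"
proof -
  interpret S: cring S by fact
  have f: "f a \<in> carrier S" "f b \<in> carrier S" "f c \<in> carrier S" "f d \<in> carrier S"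
    using assms(3,6-9) by (auto intro: ring_hom_closed)
  obtain n :: nat and e1 e2 where e12: "e1 \<in> carrier S" "e2 \<in> carrier S"
    "f a [^]\<^bsub>S\<^esub> n = e1 \<otimes>\<^bsub>S\<^esub> f c \<oplus>\<^bsub>S\<^esub> e2 \<otimes>\<^bsub>S\<^esub> f d"
    using ring_hom_radical_pair[OF assms(1-3,8,9,4)] .
  obtain m :: nat and e3 e4 where e34: "e3 \<in> carrier S" "e4 \<in> carrier S"
    "f b [^]\<^bsub>S\<^esub> m = e3 \<otimes>\<^bsub>S\<^esub> f c \<oplus>\<^bsub>S\<^esub> e4 \<otimes>\<^bsub>S\<^esub> f d"
    using ring_hom_radical_pair[OF assms(1-3,8,9,5)] .
  have "f a \<otimes>\<^bsub>S\<^esub> x \<oplus>\<^bsub>S\<^esub> f b \<otimes>\<^bsub>S\<^esub> (\<ominus>\<^bsub>S\<^esub> y) = \<one>\<^bsub>S\<^esub>"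
    using assms(10-12) f by (simp add: solves_rel_def S.minus_eq S.r_minus)
  then obtain p q where pq: "p \<in> carrier S" "q \<in> carrier S"
      "f a [^]\<^bsub>S\<^esub> n \<otimes>\<^bsub>S\<^esub> p \<oplus>\<^bsub>S\<^esub> f b [^]\<^bsub>S\<^esub> m \<otimes>\<^bsub>S\<^esub> q = \<one>\<^bsub>S\<^esub>"
    using S.comaximal_pow[of "f a" "f b" x "\<ominus>\<^bsub>S\<^esub> y" n m] f assms(10,11) by auto
  have "f c \<otimes>\<^bsub>S\<^esub> (e1 \<otimes>\<^bsub>S\<^esub> p \<oplus>\<^bsub>S\<^esub> e3 \<otimes>\<^bsub>S\<^esub> q) \<ominus>\<^bsub>S\<^esub> f d \<otimes>\<^bsub>S\<^esub> (\<ominus>\<^bsub>S\<^esub> (e2 \<otimes>\<^bsub>S\<^esub> p \<oplus>\<^bsub>S\<^esub> e4 \<otimes>\<^bsub>S\<^esub> q))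
      = (e1 \<otimes>\<^bsub>S\<^esub> f c \<oplus>\<^bsub>S\<^esub> e2 \<otimes>\<^bsub>S\<^esub> f d) \<otimes>\<^bsub>S\<^esub> p \<oplus>\<^bsub>S\<^esub> (e3 \<otimes>\<^bsub>S\<^esub> f c \<oplus>\<^bsub>S\<^esub> e4 \<otimes>\<^bsub>S\<^esub> f d) \<otimes>\<^bsub>S\<^esub> q"
    using f e12(1,2) e34(1,2) pq(1,2) by algebra
  also have "\<dots> = \<one>\<^bsub>S\<^esub>" using pq(3) e12(3) e34(3) by simp
  finally show thesis
    using that[of "e1 \<otimes>\<^bsub>S\<^esub> p \<oplus>\<^bsub>S\<^esub> e3 \<otimes>\<^bsub>S\<^esub> q" "\<ominus>\<^bsub>S\<^esub> (e2 \<otimes>\<^bsub>S\<^esub> p \<oplus>\<^bsub>S\<^esub> e4 \<otimes>\<^bsub>S\<^esub> q)"]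
      e12(1,2) e34(1,2) pq(1,2) by (simp add: solves_rel_def)
qed

section \<open>The ring \<open>R[U,V]\<close>\<close>

context
  fixes R :: "('a, 'b) ring_scheme"
  assumes R: "cring R"
begin

lemma cring_polyUV: "cring (polyUV R)"
  unfolding polyUV_def by (intro cring_UP cring_UP R)

lemma constUV_hom: "constUV R \<in> ring_hom R (polyUV R)"
proof -
  have "constUV R = (\<lambda>c. monom (UP (UP R)) c 0) \<circ> (\<lambda>c. monom (UP R) c 0)"
    by (auto simp: constUV_def)
  then show ?thesis
    unfolding polyUV_def
    using ring_hom_trans[OF UP_const_hom UP_const_hom] cring_UP R by auto
qed

lemma constUV_closed: "c \<in> carrier R \<Longrightarrow> constUV R c \<in> carrier (polyUV R)"
  by (rule ring_hom_closed[OF constUV_hom])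

lemma varU_closed: "varU R \<in> carrier (polyUV R)"
  unfolding varU_def polyUV_def by (intro UP_monom_closed UP_var_closed cring_UP R)

lemma varV_closed: "varV R \<in> carrier (polyUV R)"
  unfolding varV_def polyUV_def by (intro UP_var_closed cring_UP R)

lemma relUV_closed:
  assumes "a \<in> carrier R" "b \<in> carrier R"
  shows "relUV R a b \<in> carrier (polyUV R)"
proof -
  interpret P: cring "polyUV R" by (rule cring_polyUV)
  show ?thesis unfolding relUV_def
    by (intro P.minus_closed P.m_closed P.one_closed constUV_closed varU_closed varV_closed assms)
qed

lemma polyUV_eval:
  assumes "cring S" "f \<in> ring_hom R S" "u \<in> carrier S" "v \<in> carrier S"
  defines "g \<equiv> eval (UP R) S (eval R S f u) v"
  shows "g \<in> ring_hom (polyUV R) S"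
    and "\<And>c. c \<in> carrier R \<Longrightarrow> g (constUV R c) = f c"
    and "g (varU R) = u" and "g (varV R) = v"
proof -
  note inner = UP_eval[OF R assms(1-3)]
  note outer = UP_eval[OF cring_UP[OF R] assms(1) inner(1) assms(4)]
  show "g \<in> ring_hom (polyUV R) S"
    unfolding g_def polyUV_def by (rule outer(1))
  show "g (constUV R c) = f c" if "c \<in> carrier R" for c
    unfolding g_def constUV_def by (simp add: outer(2)[OF UP_monom_closed[OF R that]] inner(2)[OF that])
  show "g (varU R) = u"
    unfolding g_def varU_def using inner(3) by (simp add: outer(2)[OF UP_var_closed[OF R]])
  show "g (varV R) = v"
    unfolding g_def varV_def by (rule outer(3))
qed

lemma polyUV_hom_ext:
  assumes "cring S" "\<Phi> \<in> ring_hom (polyUV R) S" "\<Psi> \<in> ring_hom (polyUV R) S"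
    and "\<And>c. c \<in> carrier R \<Longrightarrow> \<Phi> (constUV R c) = \<Psi> (constUV R c)"
    and "\<Phi> (varU R) = \<Psi> (varU R)" and "\<Phi> (varV R) = \<Psi> (varV R)"
    and "p \<in> carrier (polyUV R)"
  shows "\<Phi> p = \<Psi> p"
proof -
  have cU: "cring (UP R)" by (rule cring_UP[OF R])
  have h: "\<Phi> \<circ> (\<lambda>q. monom (UP (UP R)) q 0) \<in> ring_hom (UP R) S"
          "\<Psi> \<circ> (\<lambda>q. monom (UP (UP R)) q 0) \<in> ring_hom (UP R) S"
    using assms(2,3) unfolding polyUV_def by (auto intro: ring_hom_trans[OF UP_const_hom[OF cU]])
  have "\<Phi> (monom (UP (UP R)) q 0) = \<Psi> (monom (UP (UP R)) q 0)" if "q \<in> carrier (UP R)" for q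
    using UP_hom_ext[OF R assms(1) h _ _ that] assms(4,5) unfolding varU_def constUV_def by simp
  then show ?thesis
    using UP_hom_ext[OF cU assms(1) assms(2,3)[unfolded polyUV_def] _ _ assms(7)[unfolded polyUV_def]]
      assms(6) unfolding varV_def by simp
qed

lemma ring_hom_relUV_eq_zero:
  assumes "a \<in> carrier R" "b \<in> carrier R" "cring S" "g \<in> ring_hom (polyUV R) S"
  shows "g (relUV R a b) = \<zero>\<^bsub>S\<^esub> \<longleftrightarrow>
    solves_rel S (g (constUV R a)) (g (constUV R b)) (g (varU R)) (g (varV R))"
proof -
  interpret P: cring "polyUV R" by (rule cring_polyUV)
  interpret S: cring S by fact
  have cl: "g (constUV R a) \<in> carrier S" "g (constUV R b) \<in> carrier S"
    "g (varU R) \<in> carrier S" "g (varV R) \<in> carrier S"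
    using assms by (auto intro: ring_hom_closed[OF assms(4)] constUV_closed varU_closed varV_closed)
  have "g (relUV R a b) =
      g (constUV R a) \<otimes>\<^bsub>S\<^esub> g (varU R) \<ominus>\<^bsub>S\<^esub> g (constUV R b) \<otimes>\<^bsub>S\<^esub> g (varV R) \<ominus>\<^bsub>S\<^esub> \<one>\<^bsub>S\<^esub>"
    unfolding relUV_def using assms constUV_closed varU_closed varV_closed
    by (simp add: ring_hom_minus[OF P.cring_axioms assms(3,4)] ring_hom_mult[OF assms(4)] ring_hom_one[OF assms(4)])
  then show ?thesis
    using S.minus_one_eq_zero_iff cl by (simp add: solves_rel_def)
qed

end

section \<open>The rings \<open>A\<^sub>a\<^sub>,\<^sub>b\<close> and \<open>A\<^sub>a\<^sub>,\<^sub>b[T]\<close>\<close>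

locale rel_quotient =
  fixes R :: "('a, 'b) ring_scheme" and a b :: 'a
  assumes R: "cring R" and a_closed: "a \<in> carrier R" and b_closed: "b \<in> carrier R"
begin

abbreviation rel_ideal :: "(nat \<Rightarrow> nat \<Rightarrow> 'a) set" where
  "rel_ideal \<equiv> Idl\<^bsub>polyUV R\<^esub> {relUV R a b}"

definition U :: "(nat \<Rightarrow> nat \<Rightarrow> 'a) set" where
  "U = rel_ideal +>\<^bsub>polyUV R\<^esub> varU R"

definition V :: "(nat \<Rightarrow> nat \<Rightarrow> 'a) set" where
  "V = rel_ideal +>\<^bsub>polyUV R\<^esub> varV R"

definition lift :: "('c, 'd) ring_scheme \<Rightarrow> ('a \<Rightarrow> 'c) \<Rightarrow> 'c \<Rightarrow> 'c \<Rightarrow> (nat \<Rightarrow> nat \<Rightarrow> 'a) set \<Rightarrow> 'c" where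
  "lift S f u v C = the_elem (eval (UP R) S (eval R S f u) v ` C)"

lemma rel_ideal_ideal: "ideal rel_ideal (polyUV R)"
proof -
  interpret P: cring "polyUV R" by (rule cring_polyUV[OF R])
  show ?thesis by (rule P.genideal_ideal) (use relUV_closed[OF R a_closed b_closed] in auto)
qed

lemma cring_A: "cring (A_ring R a b)"
  unfolding A_ring_def by (rule ideal.quotient_is_cring[OF rel_ideal_ideal cring_polyUV[OF R]])

lemma A_proj_hom: "(+>\<^bsub>polyUV R\<^esub>) rel_ideal \<in> ring_hom (polyUV R) (A_ring R a b)"
  unfolding A_ring_def by (rule ideal.rcos_ring_hom[OF rel_ideal_ideal])

lemma A_of_hom: "A_of R a b \<in> ring_hom R (A_ring R a b)"
proof -
  have "A_of R a b = (+>\<^bsub>polyUV R\<^esub>) rel_ideal \<circ> constUV R"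
    by (auto simp: A_of_def)
  then show ?thesis using ring_hom_trans[OF constUV_hom[OF R] A_proj_hom] by simp
qed

lemma A_of_closed: "x \<in> carrier R \<Longrightarrow> A_of R a b x \<in> carrier (A_ring R a b)"
  by (rule ring_hom_closed[OF A_of_hom])

lemma U_closed: "U \<in> carrier (A_ring R a b)"
  unfolding U_def by (rule ring_hom_closed[OF A_proj_hom varU_closed[OF R]])

lemma V_closed: "V \<in> carrier (A_ring R a b)"
  unfolding V_def by (rule ring_hom_closed[OF A_proj_hom varV_closed[OF R]])

lemma solves_rel_U_V: "solves_rel (A_ring R a b) (A_of R a b a) (A_of R a b b) U V"
proof -
  interpret I: ideal rel_ideal "polyUV R" by (rule rel_ideal_ideal)
  have "relUV R a b \<in> rel_ideal"
    by (rule I.genideal_self') (rule relUV_closed[OF R a_closed b_closed])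
  then have "rel_ideal +>\<^bsub>polyUV R\<^esub> relUV R a b = \<zero>\<^bsub>A_ring R a b\<^esub>"
    using I.a_rcos_const by (simp add: A_ring_def FactRing_def)
  then show ?thesis
    using ring_hom_relUV_eq_zero[OF R a_closed b_closed cring_A A_proj_hom]
    by (simp add: A_of_def U_def V_def)
qed

lemma lift:
  assumes S: "cring S" and f: "f \<in> ring_hom R S" and uv: "u \<in> carrier S" "v \<in> carrier S"
    and rel: "solves_rel S (f a) (f b) u v"
  shows "lift S f u v \<in> ring_hom (A_ring R a b) S"
    and "\<And>x. x \<in> carrier R \<Longrightarrow> lift S f u v (A_of R a b x) = f x"
    and "lift S f u v U = u" and "lift S f u v V = v"
proof -
  let ?g = "eval (UP R) S (eval R S f u) v"
  note g = polyUV_eval[OF R S f uv]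
  interpret P: cring "polyUV R" by (rule cring_polyUV[OF R])
  interpret S: cring S by (rule S)
  have "?g (relUV R a b) = \<zero>\<^bsub>S\<^esub>"
    using ring_hom_relUV_eq_zero[OF R a_closed b_closed S g(1)] rel a_closed b_closed g(2-4) by simp
  then have "{relUV R a b} \<subseteq> a_kernel (polyUV R) S ?g"
    using relUV_closed[OF R a_closed b_closed] by (auto simp: a_kernel_def')
  then have "rel_ideal \<subseteq> a_kernel (polyUV R) S ?g"
    by (rule P.genideal_minimal[OF ring_hom_ring.kernel_is_ideal, rotated])
       (rule ring_hom_ringI2[OF P.ring_axioms S.ring_axioms g(1)])
  then have ker: "\<And>i. i \<in> rel_ideal \<Longrightarrow> ?g i = \<zero>\<^bsub>S\<^esub>" by (auto simp: a_kernel_def')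
  note L = FactRing_lift[OF rel_ideal_ideal S.ring_axioms g(1) ker]
  show "lift S f u v \<in> ring_hom (A_ring R a b) S"
    using L(1) by (simp add: lift_def[abs_def] A_ring_def)
  show "lift S f u v (A_of R a b x) = f x" if "x \<in> carrier R" for x
    using L(2) g(2) constUV_closed[OF R that] that by (simp add: lift_def A_of_def)
  show "lift S f u v U = u"
    using L(2) g(3) varU_closed[OF R] by (simp add: lift_def U_def)
  show "lift S f u v V = v"
    using L(2) g(4) varV_closed[OF R] by (simp add: lift_def V_def)
qed

lemma A_hom_ext:
  assumes S: "cring S" and h: "\<Phi> \<in> ring_hom (A_ring R a b) S" "\<Psi> \<in> ring_hom (A_ring R a b) S"
    and "\<And>x. x \<in> carrier R \<Longrightarrow> \<Phi> (A_of R a b x) = \<Psi> (A_of R a b x)"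
    and "\<Phi> U = \<Psi> U" "\<Phi> V = \<Psi> V"
    and C: "C \<in> carrier (A_ring R a b)"
  shows "\<Phi> C = \<Psi> C"
proof -
  obtain x where x: "x \<in> carrier (polyUV R)" "C = rel_ideal +>\<^bsub>polyUV R\<^esub> x"
    using FactRing_carrier_rcos[OF rel_ideal_ideal C[unfolded A_ring_def]] by blast
  have "(\<Phi> \<circ> (+>\<^bsub>polyUV R\<^esub>) rel_ideal) x = (\<Psi> \<circ> (+>\<^bsub>polyUV R\<^esub>) rel_ideal) x"
    by (rule polyUV_hom_ext[OF R S ring_hom_trans[OF A_proj_hom h(1)] ring_hom_trans[OF A_proj_hom h(2)]])
       (use assms x in \<open>auto simp: A_of_def U_def V_def\<close>)
  then show ?thesis using x by simp
qed

definition const :: "(nat \<Rightarrow> nat \<Rightarrow> 'a) set \<Rightarrow> nat \<Rightarrow> (nat \<Rightarrow> nat \<Rightarrow> 'a) set" where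
  "const c = monom (AT_ring R a b) c 0"

definition emb :: "'a \<Rightarrow> nat \<Rightarrow> (nat \<Rightarrow> nat \<Rightarrow> 'a) set" where
  "emb x = const (A_of R a b x)"

definition UT :: "nat \<Rightarrow> (nat \<Rightarrow> nat \<Rightarrow> 'a) set" where
  "UT = const U"

definition VT :: "nat \<Rightarrow> (nat \<Rightarrow> nat \<Rightarrow> 'a) set" where
  "VT = const V"

definition varT :: "nat \<Rightarrow> (nat \<Rightarrow> nat \<Rightarrow> 'a) set" where
  "varT = monom (AT_ring R a b) \<one>\<^bsub>A_ring R a b\<^esub> 1"

lemma cring_AT: "cring (AT_ring R a b)"
  unfolding AT_ring_def by (rule cring_UP[OF cring_A])

lemma const_hom: "const \<in> ring_hom (A_ring R a b) (AT_ring R a b)"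
  unfolding const_def[abs_def] AT_ring_def by (rule UP_const_hom[OF cring_A])

lemma emb_hom: "emb \<in> ring_hom R (AT_ring R a b)"
proof -
  have "emb = const \<circ> A_of R a b" by (auto simp: emb_def)
  then show ?thesis using ring_hom_trans[OF A_of_hom const_hom] by simp
qed

lemma const_closed: "c \<in> carrier (A_ring R a b) \<Longrightarrow> const c \<in> carrier (AT_ring R a b)"
  by (rule ring_hom_closed[OF const_hom])

lemma emb_closed: "x \<in> carrier R \<Longrightarrow> emb x \<in> carrier (AT_ring R a b)"
  by (rule ring_hom_closed[OF emb_hom])

lemma UT_closed: "UT \<in> carrier (AT_ring R a b)"
  unfolding UT_def by (rule const_closed[OF U_closed])

lemma VT_closed: "VT \<in> carrier (AT_ring R a b)"
  unfolding VT_def by (rule const_closed[OF V_closed])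

lemma varT_closed: "varT \<in> carrier (AT_ring R a b)"
  unfolding varT_def AT_ring_def by (rule UP_var_closed[OF cring_A])

lemma solves_rel_UT_VT: "solves_rel (AT_ring R a b) (emb a) (emb b) UT VT"
  unfolding emb_def UT_def VT_def
  by (rule ring_hom_solves_rel[OF cring_A cring_AT const_hom _ _ U_closed V_closed solves_rel_U_V])
     (simp_all add: A_of_closed a_closed b_closed)

lemma AT_hom_ext:
  assumes S: "cring S" and h: "\<Phi> \<in> ring_hom (AT_ring R a b) S" "\<Psi> \<in> ring_hom (AT_ring R a b) S"
    and "\<And>x. x \<in> carrier R \<Longrightarrow> \<Phi> (emb x) = \<Psi> (emb x)"
    and "\<Phi> UT = \<Psi> UT" "\<Phi> VT = \<Psi> VT" "\<Phi> varT = \<Psi> varT"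
    and y: "y \<in> carrier (AT_ring R a b)"
  shows "\<Phi> y = \<Psi> y"
proof -
  have "(\<Phi> \<circ> const) c = (\<Psi> \<circ> const) c" if "c \<in> carrier (A_ring R a b)" for c
    by (rule A_hom_ext[OF S ring_hom_trans[OF const_hom h(1)] ring_hom_trans[OF const_hom h(2)] _ _ _ that])
       (use assms in \<open>auto simp: emb_def UT_def VT_def\<close>)
  then show ?thesis
    using UP_hom_ext[OF cring_A S h[unfolded AT_ring_def] _ _ y[unfolded AT_ring_def]] assms(7)
    by (simp add: const_def varT_def AT_ring_def)
qed

end

section \<open>The isomorphism\<close>

locale rel_transfer = src: rel_quotient R r s + tgt: rel_quotient R r' s'
  for R :: "('a, 'b) ring_scheme" and r s r' s' +
  fixes \<alpha> \<beta> \<alpha>' \<beta>' :: "(nat \<Rightarrow> nat \<Rightarrow> 'a) set"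
  assumes \<alpha>_closed: "\<alpha> \<in> carrier (A_ring R r s)" and \<beta>_closed: "\<beta> \<in> carrier (A_ring R r s)"
    and \<alpha>'_closed: "\<alpha>' \<in> carrier (A_ring R r' s')" and \<beta>'_closed: "\<beta>' \<in> carrier (A_ring R r' s')"
    and solves_src: "solves_rel (A_ring R r s) (A_of R r s r') (A_of R r s s') \<alpha> \<beta>"
    and solves_tgt: "solves_rel (A_ring R r' s') (A_of R r' s' r) (A_of R r' s' s) \<alpha>' \<beta>'"
begin

text \<open>\<open>shift\<close> sends \<open>U, V\<close> to the general solution \<open>(\<alpha>' + sT, \<beta>' + rT)\<close> of \<open>rx - sy = 1\<close>
  in \<open>A'[T]\<close>; \<open>transfer\<close> extends it by \<open>T \<mapsto> \<alpha>V - \<beta>U\<close>, the parameter of \<open>(\<alpha>, \<beta>)\<close>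
  as a solution of \<open>r'x - s'y = 1\<close>.\<close>
definition shift :: "(nat \<Rightarrow> nat \<Rightarrow> 'a) set \<Rightarrow> nat \<Rightarrow> (nat \<Rightarrow> nat \<Rightarrow> 'a) set" where
  "shift = src.lift (AT_ring R r' s') tgt.emb
     (tgt.const \<alpha>' \<oplus>\<^bsub>AT_ring R r' s'\<^esub> tgt.emb s \<otimes>\<^bsub>AT_ring R r' s'\<^esub> tgt.varT)
     (tgt.const \<beta>' \<oplus>\<^bsub>AT_ring R r' s'\<^esub> tgt.emb r \<otimes>\<^bsub>AT_ring R r' s'\<^esub> tgt.varT)"

definition transfer :: "(nat \<Rightarrow> (nat \<Rightarrow> nat \<Rightarrow> 'a) set) \<Rightarrow> nat \<Rightarrow> (nat \<Rightarrow> nat \<Rightarrow> 'a) set" where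
  "transfer = eval (A_ring R r s) (AT_ring R r' s') shift
     (shift \<alpha> \<otimes>\<^bsub>AT_ring R r' s'\<^esub> tgt.VT \<ominus>\<^bsub>AT_ring R r' s'\<^esub> shift \<beta> \<otimes>\<^bsub>AT_ring R r' s'\<^esub> tgt.UT)"

lemma solves_rel_shift_images:
  "solves_rel (AT_ring R r' s') (tgt.emb r) (tgt.emb s)
     (tgt.const \<alpha>' \<oplus>\<^bsub>AT_ring R r' s'\<^esub> tgt.emb s \<otimes>\<^bsub>AT_ring R r' s'\<^esub> tgt.varT)
     (tgt.const \<beta>' \<oplus>\<^bsub>AT_ring R r' s'\<^esub> tgt.emb r \<otimes>\<^bsub>AT_ring R r' s'\<^esub> tgt.varT)"
proof -
  interpret T': cring "AT_ring R r' s'" by (rule tgt.cring_AT)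
  have "solves_rel (AT_ring R r' s') (tgt.emb r) (tgt.emb s) (tgt.const \<alpha>') (tgt.const \<beta>')"
    unfolding tgt.emb_def
    by (rule ring_hom_solves_rel[OF tgt.cring_A tgt.cring_AT tgt.const_hom _ _ \<alpha>'_closed \<beta>'_closed solves_tgt])
       (simp_all add: tgt.A_of_closed src.a_closed src.b_closed)
  then show ?thesis
    by (intro T'.solves_rel_shift tgt.emb_closed tgt.const_closed tgt.varT_closed
        src.a_closed src.b_closed \<alpha>'_closed \<beta>'_closed)
qed

lemma shift:
  shows "shift \<in> ring_hom (A_ring R r s) (AT_ring R r' s')"
    and "\<And>x. x \<in> carrier R \<Longrightarrow> shift (A_of R r s x) = tgt.emb x"
    and "shift src.U = tgt.const \<alpha>' \<oplus>\<^bsub>AT_ring R r' s'\<^esub> tgt.emb s \<otimes>\<^bsub>AT_ring R r' s'\<^esub> tgt.varT"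
    and "shift src.V = tgt.const \<beta>' \<oplus>\<^bsub>AT_ring R r' s'\<^esub> tgt.emb r \<otimes>\<^bsub>AT_ring R r' s'\<^esub> tgt.varT"
proof -
  interpret T': cring "AT_ring R r' s'" by (rule tgt.cring_AT)
  note L = src.lift[OF tgt.cring_AT tgt.emb_hom _ _ solves_rel_shift_images]
  have cl: "tgt.const \<alpha>' \<oplus>\<^bsub>AT_ring R r' s'\<^esub> tgt.emb s \<otimes>\<^bsub>AT_ring R r' s'\<^esub> tgt.varT \<in> carrier (AT_ring R r' s')"
    "tgt.const \<beta>' \<oplus>\<^bsub>AT_ring R r' s'\<^esub> tgt.emb r \<otimes>\<^bsub>AT_ring R r' s'\<^esub> tgt.varT \<in> carrier (AT_ring R r' s')"
    by (intro T'.a_closed T'.m_closed tgt.emb_closed tgt.const_closed tgt.varT_closed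
        src.a_closed src.b_closed \<alpha>'_closed \<beta>'_closed)+
  show "shift \<in> ring_hom (A_ring R r s) (AT_ring R r' s')"
    unfolding shift_def by (rule L(1)[OF cl])
  show "shift (A_of R r s x) = tgt.emb x" if "x \<in> carrier R" for x
    unfolding shift_def by (rule L(2)[OF cl that])
  show "shift src.U = tgt.const \<alpha>' \<oplus>\<^bsub>AT_ring R r' s'\<^esub> tgt.emb s \<otimes>\<^bsub>AT_ring R r' s'\<^esub> tgt.varT"
    unfolding shift_def by (rule L(3)[OF cl])
  show "shift src.V = tgt.const \<beta>' \<oplus>\<^bsub>AT_ring R r' s'\<^esub> tgt.emb r \<otimes>\<^bsub>AT_ring R r' s'\<^esub> tgt.varT"
    unfolding shift_def by (rule L(4)[OF cl])
qed

lemma transfer: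
  shows "transfer \<in> ring_hom (AT_ring R r s) (AT_ring R r' s')"
    and "\<And>c. c \<in> carrier (A_ring R r s) \<Longrightarrow> transfer (src.const c) = shift c"
    and "transfer src.varT =
      shift \<alpha> \<otimes>\<^bsub>AT_ring R r' s'\<^esub> tgt.VT \<ominus>\<^bsub>AT_ring R r' s'\<^esub> shift \<beta> \<otimes>\<^bsub>AT_ring R r' s'\<^esub> tgt.UT"
proof -
  interpret T': cring "AT_ring R r' s'" by (rule tgt.cring_AT)
  have "shift \<alpha> \<otimes>\<^bsub>AT_ring R r' s'\<^esub> tgt.VT \<ominus>\<^bsub>AT_ring R r' s'\<^esub> shift \<beta> \<otimes>\<^bsub>AT_ring R r' s'\<^esub> tgt.UT
      \<in> carrier (AT_ring R r' s')"
    using ring_hom_closed[OF shift(1)] \<alpha>_closed \<beta>_closed tgt.UT_closed tgt.VT_closed by auto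
  note E = UP_eval[OF src.cring_A tgt.cring_AT shift(1) this]
  show "transfer \<in> ring_hom (AT_ring R r s) (AT_ring R r' s')"
    using E(1) by (simp add: transfer_def AT_ring_def)
  show "transfer (src.const c) = shift c" if "c \<in> carrier (A_ring R r s)" for c
    using E(2)[OF that] by (simp add: transfer_def AT_ring_def src.const_def)
  show "transfer src.varT =
      shift \<alpha> \<otimes>\<^bsub>AT_ring R r' s'\<^esub> tgt.VT \<ominus>\<^bsub>AT_ring R r' s'\<^esub> shift \<beta> \<otimes>\<^bsub>AT_ring R r' s'\<^esub> tgt.UT"
    using E(3) by (simp add: transfer_def AT_ring_def src.varT_def)
qed

lemma transfer_emb: "x \<in> carrier R \<Longrightarrow> transfer (src.emb x) = tgt.emb x"
  unfolding src.emb_def using transfer(2)[OF src.A_of_closed] shift(2) by simp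

lemma transfer_UT:
  "transfer src.UT = tgt.const \<alpha>' \<oplus>\<^bsub>AT_ring R r' s'\<^esub> tgt.emb s \<otimes>\<^bsub>AT_ring R r' s'\<^esub> tgt.varT"
  unfolding src.UT_def using transfer(2)[OF src.U_closed] shift(3) by simp

lemma transfer_VT:
  "transfer src.VT = tgt.const \<beta>' \<oplus>\<^bsub>AT_ring R r' s'\<^esub> tgt.emb r \<otimes>\<^bsub>AT_ring R r' s'\<^esub> tgt.varT"
  unfolding src.VT_def using transfer(2)[OF src.V_closed] shift(4) by simp

(* The cyclic registration does not receive facts proved later in this context;
   transfer_ring_iso, which needs swap.transfer_inverse, is therefore stated outside. *)
sublocale swap: rel_transfer R r' s' r s \<alpha>' \<beta>' \<alpha> \<beta>
  by unfold_locales (fact \<alpha>_closed \<beta>_closed \<alpha>'_closed \<beta>'_closed solves_src solves_tgt)+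

lemma swap_shift_solves_rel:
  "solves_rel (AT_ring R r s) (src.emb r) (src.emb s) (swap.shift \<alpha>') (swap.shift \<beta>')"
  using ring_hom_solves_rel[OF tgt.cring_A src.cring_AT swap.shift(1)
      tgt.A_of_closed[OF src.a_closed] tgt.A_of_closed[OF src.b_closed] \<alpha>'_closed \<beta>'_closed solves_tgt]
  by (simp add: swap.shift(2) src.a_closed src.b_closed)

lemma transfer_inverse_UT_VT:
  shows "swap.transfer (transfer src.UT) = src.UT" and "swap.transfer (transfer src.VT) = src.VT"
proof -
  interpret T: cring "AT_ring R r s" by (rule src.cring_AT)
  interpret T': cring "AT_ring R r' s'" by (rule tgt.cring_AT)
  let ?t = "swap.shift \<alpha>' \<otimes>\<^bsub>AT_ring R r s\<^esub> src.VT \<ominus>\<^bsub>AT_ring R r s\<^esub> swap.shift \<beta>' \<otimes>\<^bsub>AT_ring R r s\<^esub> src.UT"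
  note h = swap.transfer(1)
  have cl: "swap.shift \<alpha>' \<in> carrier (AT_ring R r s)" "swap.shift \<beta>' \<in> carrier (AT_ring R r s)"
    using ring_hom_closed[OF swap.shift(1)] \<alpha>'_closed \<beta>'_closed by auto
  have emb: "src.emb r \<in> carrier (AT_ring R r s)" "src.emb s \<in> carrier (AT_ring R r s)"
    "tgt.emb r \<in> carrier (AT_ring R r' s')" "tgt.emb s \<in> carrier (AT_ring R r' s')"
    by (simp_all add: src.emb_closed tgt.emb_closed src.a_closed src.b_closed)
  note closed = emb tgt.const_closed[OF \<alpha>'_closed] tgt.const_closed[OF \<beta>'_closed] tgt.varT_closed
  note diff = T.solves_rel_difference[OF emb(1,2) src.UT_closed src.VT_closed cl
      src.solves_rel_UT_VT swap_shift_solves_rel]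
  have "swap.transfer (transfer src.UT) = swap.shift \<alpha>' \<oplus>\<^bsub>AT_ring R r s\<^esub> src.emb s \<otimes>\<^bsub>AT_ring R r s\<^esub> ?t"
    using closed by (simp add: transfer_UT ring_hom_add[OF h] ring_hom_mult[OF h]
        swap.transfer(2)[OF \<alpha>'_closed] swap.transfer_emb src.b_closed swap.transfer(3))
  also have "\<dots> = src.UT" by (rule diff(1))
  finally show "swap.transfer (transfer src.UT) = src.UT" .
  have "swap.transfer (transfer src.VT) = swap.shift \<beta>' \<oplus>\<^bsub>AT_ring R r s\<^esub> src.emb r \<otimes>\<^bsub>AT_ring R r s\<^esub> ?t"
    using closed by (simp add: transfer_VT ring_hom_add[OF h] ring_hom_mult[OF h]
        swap.transfer(2)[OF \<beta>'_closed] swap.transfer_emb src.a_closed swap.transfer(3))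
  also have "\<dots> = src.VT" by (rule diff(2))
  finally show "swap.transfer (transfer src.VT) = src.VT" .
qed

lemma transfer_inverse_shift:
  assumes "c \<in> carrier (A_ring R r s)"
  shows "swap.transfer (shift c) = src.const c"
proof -
  have "(swap.transfer \<circ> shift) c = src.const c"
  proof (rule src.A_hom_ext[OF src.cring_AT ring_hom_trans[OF shift(1) swap.transfer(1)] src.const_hom _ _ _ assms])
    show "(swap.transfer \<circ> shift) (A_of R r s x) = src.const (A_of R r s x)" if "x \<in> carrier R" for x
      using that by (simp add: shift(2) swap.transfer_emb src.emb_def)
    show "(swap.transfer \<circ> shift) src.U = src.const src.U"
      using transfer_inverse_UT_VT(1) transfer(2)[OF src.U_closed] by (simp add: src.UT_def)
    show "(swap.transfer \<circ> shift) src.V = src.const src.V"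
      using transfer_inverse_UT_VT(2) transfer(2)[OF src.V_closed] by (simp add: src.VT_def)
  qed
  then show ?thesis by simp
qed

lemma transfer_inverse_varT: "swap.transfer (transfer src.varT) = src.varT"
proof -
  interpret T: cring "AT_ring R r s" by (rule src.cring_AT)
  interpret T': cring "AT_ring R r' s'" by (rule tgt.cring_AT)
  note h = swap.transfer(1)
  have cl: "shift \<alpha> \<in> carrier (AT_ring R r' s')" "shift \<beta> \<in> carrier (AT_ring R r' s')"
    using ring_hom_closed[OF shift(1)] \<alpha>_closed \<beta>_closed by auto
  have "solves_rel (AT_ring R r s) (src.emb r') (src.emb s') (src.const \<alpha>) (src.const \<beta>)"
    unfolding src.emb_def
    by (rule ring_hom_solves_rel[OF src.cring_A src.cring_AT src.const_hom _ _ \<alpha>_closed \<beta>_closed solves_src])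
       (simp_all add: src.A_of_closed tgt.a_closed tgt.b_closed)
  note recover = T.solves_rel_recover_param[OF _ _ src.const_closed[OF \<alpha>_closed]
      src.const_closed[OF \<beta>_closed] src.varT_closed this]
  have "swap.transfer (transfer src.varT) =
      src.const \<alpha> \<otimes>\<^bsub>AT_ring R r s\<^esub> swap.transfer tgt.VT \<ominus>\<^bsub>AT_ring R r s\<^esub>
      src.const \<beta> \<otimes>\<^bsub>AT_ring R r s\<^esub> swap.transfer tgt.UT"
    using cl tgt.UT_closed tgt.VT_closed
    by (simp add: transfer(3) ring_hom_minus[OF tgt.cring_AT src.cring_AT h] ring_hom_mult[OF h]
        transfer_inverse_shift \<alpha>_closed \<beta>_closed)
  also have "\<dots> = src.varT"
    using recover swap.transfer_UT swap.transfer_VT by (simp add: src.emb_closed tgt.a_closed tgt.b_closed)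
  finally show ?thesis .
qed

lemma transfer_inverse:
  assumes "y \<in> carrier (AT_ring R r s)"
  shows "swap.transfer (transfer y) = y"
proof -
  have "(swap.transfer \<circ> transfer) y = id y"
    by (rule src.AT_hom_ext[OF src.cring_AT ring_hom_trans[OF transfer(1) swap.transfer(1)] id_ring_hom _ _ _ _ assms])
       (simp_all add: transfer_emb swap.transfer_emb transfer_inverse_UT_VT transfer_inverse_varT)
  then show ?thesis by simp
qed

end

lemma (in rel_transfer) transfer_ring_iso: "transfer \<in> ring_iso (AT_ring R r s) (AT_ring R r' s')"
proof -
  have "bij_betw transfer (carrier (AT_ring R r s)) (carrier (AT_ring R r' s'))"
    by (rule bij_betw_byWitness[where f' = swap.transfer])
       (use transfer_inverse swap.transfer_inverse ring_hom_closed[OF transfer(1)]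
          ring_hom_closed[OF swap.transfer(1)] in auto)
  then show ?thesis
    unfolding ring_iso_def using transfer(1) by simp
qed

lemma AT_ring_iso_of_radical_eq:
  assumes R: "cring R" and carrier: "r \<in> carrier R" "s \<in> carrier R" "r' \<in> carrier R" "s' \<in> carrier R"
    and rad: "radical R (Idl\<^bsub>R\<^esub> {r, s}) = radical R (Idl\<^bsub>R\<^esub> {r', s'})"
  obtains h where "h \<in> ring_iso (AT_ring R r s) (AT_ring R r' s')"
    and "\<And>x. x \<in> carrier R \<Longrightarrow>
      h (monom (AT_ring R r s) (A_of R r s x) 0) = monom (AT_ring R r' s') (A_of R r' s' x) 0"
proof -
  interpret src: rel_quotient R r s using R carrier by (simp add: rel_quotient_def)
  interpret tgt: rel_quotient R r' s' using R carrier by (simp add: rel_quotient_def)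
  interpret R: cring R by (rule R)
  have "r \<in> radical R (Idl\<^bsub>R\<^esub> {r', s'})" "s \<in> radical R (Idl\<^bsub>R\<^esub> {r', s'})"
    using R.self_in_radical_pair[OF carrier(1,2)] rad by auto
  then obtain \<alpha> \<beta> where \<alpha>\<beta>: "\<alpha> \<in> carrier (A_ring R r s)" "\<beta> \<in> carrier (A_ring R r s)"
    "solves_rel (A_ring R r s) (A_of R r s r') (A_of R r s s') \<alpha> \<beta>"
    by (rule solves_rel_radical_transfer[OF R src.cring_A src.A_of_hom _ _ carrier
          src.U_closed src.V_closed src.solves_rel_U_V])
  have "r' \<in> radical R (Idl\<^bsub>R\<^esub> {r, s})" "s' \<in> radical R (Idl\<^bsub>R\<^esub> {r, s})"
    using R.self_in_radical_pair[OF carrier(3,4)] rad by auto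
  then obtain \<alpha>' \<beta>' where \<alpha>'\<beta>': "\<alpha>' \<in> carrier (A_ring R r' s')" "\<beta>' \<in> carrier (A_ring R r' s')"
    "solves_rel (A_ring R r' s') (A_of R r' s' r) (A_of R r' s' s) \<alpha>' \<beta>'"
    by (rule solves_rel_radical_transfer[OF R tgt.cring_A tgt.A_of_hom _ _ carrier(3,4,1,2)
          tgt.U_closed tgt.V_closed tgt.solves_rel_U_V])
  interpret rel_transfer R r s r' s' \<alpha> \<beta> \<alpha>' \<beta>'
    by (intro rel_transfer.intro rel_transfer_axioms.intro src.rel_quotient_axioms
        tgt.rel_quotient_axioms \<alpha>\<beta> \<alpha>'\<beta>')
  show thesis
    by (rule that[OF transfer_ring_iso])
       (use transfer_emb in \<open>simp add: src.emb_def src.const_def tgt.emb_def tgt.const_def\<close>)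
qed

theorem mainTheorem4:
  fixes R :: "('a, 'b) ring_scheme" and \<phi> :: "complex \<Rightarrow> 'a"
    and r s r' s' :: 'a
  assumes "domain R"
    and "fg_C_algebra R \<phi>"
    and "r \<in> carrier R" "s \<in> carrier R" "r' \<in> carrier R" "s' \<in> carrier R"
    and "radical R (Idl\<^bsub>R\<^esub> {r, s}) = radical R (Idl\<^bsub>R\<^esub> {r', s'})"
  shows "C_alg_iso (AT_ring R r s) (AT_struct R \<phi> r s) (AT_ring R r' s') (AT_struct R \<phi> r' s')"
proof -
  have R: "cring R" and \<phi>: "\<phi> \<in> ring_hom complex_ring R"
    using assms(2) by (auto simp: fg_C_algebra_def)
  have \<phi>_closed: "\<phi> z \<in> carrier R" for z
    using ring_hom_closed[OF \<phi>] by (simp add: complex_ring_def)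
  obtain h where "h \<in> ring_iso (AT_ring R r s) (AT_ring R r' s')"
    and "\<And>x. x \<in> carrier R \<Longrightarrow>
      h (monom (AT_ring R r s) (A_of R r s x) 0) = monom (AT_ring R r' s') (A_of R r' s' x) 0"
    using AT_ring_iso_of_radical_eq[OF R assms(3-7)] by blast
  then show ?thesis
    unfolding C_alg_iso_def AT_struct_def using \<phi>_closed by blast
qed

end
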